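(* Let $v=[v_1,\ldots,v_N]^\top$ be a random vector with probability density $q(v)$ and marginal densities $q_i(v_i)$, $i=1,\ldots,N$, and let $w_i\geq 0$ for $i=1,\ldots,N$. Then, for any non-negative valued function $\Psi$, \[ \int \log\Bigl(\sum_{i=1}^{N} w_i \Psi(v_i)\Bigr)\, q(v)\,dv \;\geq\; \log\Bigl(\sum_{i=1}^{N} w_i e^{\xi_i}\Bigr), \qquad\text{where}\qquad \xi_i := \int \log \Psi(v_i)\, q_i(v_i)\, dv_i . \] *)

theory Defs
  imports "HOL-Analysis.Analysis"
begin

definition is_pdf :: "('a::euclidean_space \<Rightarrow> real) \<Rightarrow> bool" where
  "is_pdf q \<longleftrightarrow> q \<in> borel_measurable lborel \<and> (\<forall>x. 0 \<le> q x) \<and>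
     integrable lborel q \<and> (\<integral>x. q x \<partial>lborel) = 1"

definition is_marginal_pdf :: "(real^'n \<Rightarrow> real) \<Rightarrow> 'n \<Rightarrow> (real \<Rightarrow> real) \<Rightarrow> bool" where
  "is_marginal_pdf q i qi \<longleftrightarrow> is_pdf qi \<and>
     distr (density lborel (\<lambda>v. ennreal (q v))) lborel (\<lambda>v. v $ i)
       = density lborel (\<lambda>x. ennreal (qi x))"

end

theory Submission
  imports Defs "HOL-Probability.Probability_Measure"
begin

text \<open>With \<open>\<xi> i = E[ln Y i]\<close>, \<open>a i = w i * exp (\<xi> i)\<close> and \<open>S = \<Sum>i. a i\<close>, Jensen's inequality
  for exp gives the pointwise bound \<open>ln (\<Sum>i. w i * Y i) \<ge> ln S + \<Sum>i. (a i / S) * (ln (Y i) - \<xi> i)\<close>,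
  whose right-hand side has expectation \<open>ln S\<close>. The theorem is the case \<open>Y i = \<Psi> (v i)\<close> under the
  law with density \<open>q\<close>; the marginal densities only serve to compute \<open>E[ln Y i]\<close>.\<close>

lemma ln_weighted_sum_exp_ge:
  fixes a u :: "'i \<Rightarrow> real"
  assumes A: "finite A" and a: "\<And>i. i \<in> A \<Longrightarrow> 0 \<le> a i" and S: "0 < sum a A"
  shows "ln (sum a A) + (\<Sum>i\<in>A. a i * u i) / sum a A \<le> ln (\<Sum>i\<in>A. a i * exp (u i))"
proof -
  let ?S = "sum a A"
  have "A \<noteq> {}" using S by auto
  have "exp (\<Sum>i\<in>A. a i / ?S * u i) \<le> (\<Sum>i\<in>A. a i / ?S * exp (u i))"
    using convex_on_sum[OF A \<open>A \<noteq> {}\<close> exp_convex, of "\<lambda>i. a i / ?S" u] S a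
    by (simp add: sum_divide_distrib[symmetric])
  also have "\<dots> = (\<Sum>i\<in>A. a i * exp (u i)) / ?S"
    by (simp add: sum_divide_distrib)
  finally have jensen: "exp ((\<Sum>i\<in>A. a i * u i) / ?S) \<le> (\<Sum>i\<in>A. a i * exp (u i)) / ?S"
    by (simp add: sum_divide_distrib)
  moreover have pos: "0 < (\<Sum>i\<in>A. a i * exp (u i)) / ?S"
    using jensen exp_gt_zero order_less_le_trans by blast
  ultimately have "(\<Sum>i\<in>A. a i * u i) / ?S \<le> ln ((\<Sum>i\<in>A. a i * exp (u i)) / ?S)"
    by (simp add: ln_ge_iff)
  with S pos show ?thesis
    by (simp add: ln_div zero_less_divide_iff)
qed

lemma (in prob_space) ln_weighted_sum_expectation_ge:
  fixes w :: "'i \<Rightarrow> real" and Y :: "'i \<Rightarrow> 'a \<Rightarrow> real"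
  assumes A: "finite A" and w: "\<And>i. i \<in> A \<Longrightarrow> 0 \<le> w i"
    and Y_pos: "\<And>i. i \<in> A \<Longrightarrow> AE x in M. 0 < Y i x"
    and ln_Y: "\<And>i. i \<in> A \<Longrightarrow> integrable M (\<lambda>x. ln (Y i x))"
    and ln_sum: "integrable M (\<lambda>x. ln (\<Sum>i\<in>A. w i * Y i x))"
  shows "ln (\<Sum>i\<in>A. w i * exp (expectation (\<lambda>x. ln (Y i x))))
           \<le> expectation (\<lambda>x. ln (\<Sum>i\<in>A. w i * Y i x))"
proof -
  define xi where "xi i = expectation (\<lambda>x. ln (Y i x))" for i
  define a where "a i = w i * exp (xi i)" for i
  define S where "S = (\<Sum>i\<in>A. a i)"
  have a_nonneg: "0 \<le> a i" if "i \<in> A" for i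
    using w[OF that] by (simp add: a_def)
  show ?thesis
  proof (cases "S = 0")
    case True
    \<comment> \<open>then all weights vanish and both sides are \<open>ln 0 = 0\<close>\<close>
    then have "w i = 0" if "i \<in> A" for i
      using a_nonneg A that by (simp add: S_def a_def sum_nonneg_eq_0_iff)
    then show ?thesis by simp
  next
    case False
    then have S_pos: "0 < S"
      using a_nonneg by (simp add: S_def order_less_le sum_nonneg)
    define g where "g x = ln S + (\<Sum>i\<in>A. a i / S * (ln (Y i x) - xi i))" for x
    have const: "has_bochner_integral M (\<lambda>_. c) c" for c :: real
      using has_bochner_integral_integrable[OF integrable_const[of c]] by (simp add: prob_space)
    have "has_bochner_integral M g (ln S + (\<Sum>i\<in>A. a i / S * (xi i - xi i)))"
      unfolding g_def xi_def
      by (intro has_bochner_integral_add has_bochner_integral_sum has_bochner_integral_mult_right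
          has_bochner_integral_diff has_bochner_integral_integrable const ln_Y)
    then have g_int: "integrable M g" and g_expectation: "expectation g = ln S"
      by (simp_all add: has_bochner_integral_iff)
    have "AE x in M. \<forall>i\<in>A. 0 < Y i x"
      using A Y_pos by (rule AE_finite_allI)
    then have "AE x in M. g x \<le> ln (\<Sum>i\<in>A. w i * Y i x)"
    proof eventually_elim
      case (elim x)
      define u where "u i = ln (Y i x) - xi i" for i
      have "(\<Sum>i\<in>A. a i * exp (u i)) = (\<Sum>i\<in>A. w i * Y i x)"
        using elim by (intro sum.cong) (simp_all add: a_def u_def exp_diff)
      moreover have "g x = ln S + (\<Sum>i\<in>A. a i * u i) / S"
        by (simp add: g_def u_def sum_divide_distrib)
      ultimately show ?case
        using ln_weighted_sum_exp_ge[of A a u] A a_nonneg S_pos by (simp add: S_def)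
    qed
    then have "ln S \<le> expectation (\<lambda>x. ln (\<Sum>i\<in>A. w i * Y i x))"
      using integral_mono_AE[OF g_int ln_sum] g_expectation by simp
    then show ?thesis
      by (simp add: S_def a_def xi_def)
  qed
qed

lemma is_pdf_prob_space:
  assumes "is_pdf q"
  shows "prob_space (density lborel q)"
proof
  have "emeasure (density lborel q) (space (density lborel q)) = (\<integral>\<^sup>+x. q x \<partial>lborel)"
    using assms by (simp add: emeasure_density is_pdf_def)
  also have "\<dots> = ennreal (\<integral>x. q x \<partial>lborel)"
    using assms by (intro nn_integral_eq_integral) (auto simp: is_pdf_def)
  finally show "emeasure (density lborel q) (space (density lborel q)) = 1"
    using assms by (simp add: is_pdf_def)
qed

lemma is_pdf_integrable_density_iff:
  assumes "is_pdf q" and [measurable]: "f \<in> borel_measurable borel"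
  shows "integrable (density lborel q) f \<longleftrightarrow> integrable lborel (\<lambda>x. f x * q x)"
  using assms by (subst integrable_density) (auto simp: is_pdf_def mult.commute)

lemma is_pdf_integral_density:
  assumes "is_pdf q" and [measurable]: "f \<in> borel_measurable borel"
  shows "(\<integral>x. f x \<partial>density lborel q) = (\<integral>x. f x * q x \<partial>lborel)"
  using assms by (subst integral_density) (auto simp: is_pdf_def mult.commute)

lemma is_marginal_pdf_law:
  assumes "is_marginal_pdf q i qi"
  shows "density lborel qi = distr (density lborel q) lborel (\<lambda>v. v $ i)"
  using assms by (simp add: is_marginal_pdf_def)

lemma
  fixes f :: "real \<Rightarrow> real"
  assumes "is_marginal_pdf q i qi" and [measurable]: "f \<in> borel_measurable borel"
  shows integrable_marginal_iff:
      "integrable (density lborel q) (\<lambda>v. f (v $ i)) \<longleftrightarrow> integrable (density lborel qi) f"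
    and integral_marginal:
      "(\<integral>v. f (v $ i) \<partial>density lborel q) = (\<integral>x. f x \<partial>density lborel qi)"
  using assms by (simp_all add: is_marginal_pdf_law integrable_distr_eq integral_distr)

lemma AE_marginal:
  assumes "is_marginal_pdf q i qi" and [measurable]: "Measurable.pred borel P"
    and "AE x in density lborel qi. P x"
  shows "AE v in density lborel q. P (v $ i)"
  using assms(3) unfolding is_marginal_pdf_law[OF assms(1)] by (simp add: AE_distr_iff)

theorem lemma1:
  fixes q :: "real^'n \<Rightarrow> real" and qm :: "'n \<Rightarrow> real \<Rightarrow> real"
    and w :: "'n \<Rightarrow> real" and Psi :: "real \<Rightarrow> real"
  assumes q: "is_pdf q"
    and marg: "\<forall>i. is_marginal_pdf q i (qm i)"
    and w: "\<forall>i. 0 \<le> w i"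
    and Psi_nonneg: "\<forall>x. 0 \<le> Psi x"
    and Psi_meas: "Psi \<in> borel_measurable borel"
    and Psi_pos: "\<forall>i. AE x in density lborel (\<lambda>x. ennreal (qm i x)). 0 < Psi x"
    and xi_int: "\<forall>i. integrable lborel (\<lambda>x. ln (Psi x) * qm i x)"
    and lhs_int: "integrable lborel (\<lambda>v. ln (\<Sum>i\<in>UNIV. w i * Psi (v $ i)) * q v)"
  shows "(\<integral>v. ln (\<Sum>i\<in>UNIV. w i * Psi (v $ i)) * q v \<partial>lborel)
           \<ge> ln (\<Sum>i\<in>UNIV. w i * exp (\<integral>x. ln (Psi x) * qm i x \<partial>lborel))"
proof -
  let ?M = "density lborel q"
  interpret prob_space ?M
    using q by (rule is_pdf_prob_space)
  note [measurable] = Psi_meas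
  have ln_Psi_meas: "(\<lambda>x. ln (Psi x)) \<in> borel_measurable borel"
    by measurable
  have qm: "is_pdf (qm i)" for i
    using marg by (simp add: is_marginal_pdf_def)
  have ln_Psi: "integrable ?M (\<lambda>v. ln (Psi (v $ i)))" for i
    using xi_int by (simp add: integrable_marginal_iff[OF marg[rule_format] ln_Psi_meas]
        is_pdf_integrable_density_iff[OF qm ln_Psi_meas])
  have xi: "expectation (\<lambda>v. ln (Psi (v $ i))) = (\<integral>x. ln (Psi x) * qm i x \<partial>lborel)" for i
    by (simp add: integral_marginal[OF marg[rule_format] ln_Psi_meas]
        is_pdf_integral_density[OF qm ln_Psi_meas])
  have Psi_pos_joint: "AE v in ?M. 0 < Psi (v $ i)" for i
    using AE_marginal[OF marg[rule_format] _ Psi_pos[rule_format]] by simp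
  have "integrable ?M (\<lambda>v. ln (\<Sum>i\<in>UNIV. w i * Psi (v $ i)))"
    using q lhs_int by (simp add: is_pdf_integrable_density_iff)
  then have "ln (\<Sum>i\<in>UNIV. w i * exp (expectation (\<lambda>v. ln (Psi (v $ i)))))
      \<le> expectation (\<lambda>v. ln (\<Sum>i\<in>UNIV. w i * Psi (v $ i)))"
    using w Psi_pos_joint ln_Psi
    by (intro ln_weighted_sum_expectation_ge[where Y="\<lambda>i v. Psi (v $ i)"]) auto
  then show ?thesis
    using q by (simp add: xi is_pdf_integral_density)
qed

end
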